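(* Let $C$ and $C'$ be two cycle graphs with the same degree sequence. If $e\in E(C)\cap E(C')$, then there exists a u-switch sequence transforming $C$ into $C'$: 2-switches $\tau_1,\dots,\tau_k$ ($k\ge0$) such that, with $C_0=C$ and $C_i=\tau_i(C_{i-1})$, each $\tau_i$ is a u-switch over $C_{i-1}$ and $C_k=C'$.
   Context: Graphs are finite, simple, undirected, labeled with vertex set $[n]$; the degree sequence of $G$ is $(d_1,\dots,d_n)$ with $d_i$ the degree of vertex $i$. A unicyclic graph is a connected graph with exactly one cycle. For vertices $a,b,c,d$, $A=\binom{a\ b}{c\ d}$ is interchangeable in $G$ if $ab,cd\in E(G)$, $\{a,b\}\cap\{c,d\}=\varnothing$, $ac,bd\notin E(G)$; the 2-switch $\tau_A$ sends $G$ to $G-ab-cd+ac+bd$ if $A$ is interchangeable and to $G$ otherwise (trivial). A nontrivial 2-switch $\tau$ over a unicyclic $U$ is a u-switch if $\tau(U)$ is unicyclic. *)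

theory Defs
  imports Main
begin

definition simple_graph :: "nat \<Rightarrow> nat set set \<Rightarrow> bool" where
  "simple_graph n E \<longleftrightarrow>
     (\<forall>e\<in>E. \<exists>a b. e = {a, b} \<and> a \<noteq> b \<and> a \<in> {1..n} \<and> b \<in> {1..n})"

definition degree :: "nat set set \<Rightarrow> nat \<Rightarrow> nat" where
  "degree E v = card {u. {u, v} \<in> E}"

definition adj_rel :: "nat set set \<Rightarrow> (nat \<times> nat) set" where
  "adj_rel E = {(a, b). {a, b} \<in> E \<and> a \<noteq> b}"

definition connected_on :: "nat set \<Rightarrow> nat set set \<Rightarrow> bool" where
  "connected_on V E \<longleftrightarrow> (\<forall>u\<in>V. \<forall>v\<in>V. (u, v) \<in> (adj_rel E)\<^sup>*)"

definition is_cycle_on :: "nat set \<Rightarrow> nat set set \<Rightarrow> bool" where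
  "is_cycle_on V F \<longleftrightarrow> F \<noteq> {} \<and> finite F \<and> \<Union>F = V \<and>
     (\<forall>e\<in>F. card e = 2) \<and> (\<forall>v\<in>V. degree F v = 2) \<and> connected_on V F"

definition cycle_graph :: "nat \<Rightarrow> nat set set \<Rightarrow> bool" where
  "cycle_graph n E \<longleftrightarrow> simple_graph n E \<and> is_cycle_on {1..n} E"

definition cycle_of :: "nat set set \<Rightarrow> nat set set \<Rightarrow> bool" where
  "cycle_of E F \<longleftrightarrow> F \<subseteq> E \<and> is_cycle_on (\<Union>F) F"

definition unicyclic :: "nat \<Rightarrow> nat set set \<Rightarrow> bool" where
  "unicyclic n E \<longleftrightarrow> simple_graph n E \<and> connected_on {1..n} E \<and> (\<exists>!F. cycle_of E F)"

text \<open>2-switches, given by A = (a,b,c,d) standing for the matrix (a b; c d).\<close>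
definition interchangeable :: "nat set set \<Rightarrow> nat \<times> nat \<times> nat \<times> nat \<Rightarrow> bool" where
  "interchangeable E A = (case A of (a, b, c, d) \<Rightarrow>
     {a, b} \<in> E \<and> {c, d} \<in> E \<and> {a, b} \<inter> {c, d} = {} \<and> {a, c} \<notin> E \<and> {b, d} \<notin> E)"

definition two_switch :: "nat \<times> nat \<times> nat \<times> nat \<Rightarrow> nat set set \<Rightarrow> nat set set" where
  "two_switch A E = (case A of (a, b, c, d) \<Rightarrow>
     (if interchangeable E A then (E - {{a, b}, {c, d}}) \<union> {{a, c}, {b, d}} else E))"

definition u_switch :: "nat \<Rightarrow> nat set set \<Rightarrow> nat \<times> nat \<times> nat \<times> nat \<Rightarrow> bool" where
  "u_switch n U A \<longleftrightarrow> interchangeable U A \<and> unicyclic n (two_switch A U)"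

fun u_switch_seq :: "nat \<Rightarrow> nat set set \<Rightarrow> (nat \<times> nat \<times> nat \<times> nat) list \<Rightarrow> nat set set \<Rightarrow> bool" where
  "u_switch_seq n G [] G' \<longleftrightarrow> G = G'"
| "u_switch_seq n G (t # ts) G' \<longleftrightarrow> u_switch n G t \<and> u_switch_seq n (two_switch t G) ts G'"

end

theory Submission
  imports Defs
begin

text \<open>
A cycle graph on [n] is the edge set of a cyclic ordering of the vertices. Reversing a segment
of such an ordering exchanges the two edges that leave the segment for two new ones, i.e. it is a
2-switch, and the result is again a cycle graph, hence unicyclic. Given two orderings that agree
on their first k entries, reversing the segment from position k to the position of the target's
k-th vertex makes them agree on k + 1 entries; so after a rotation finitely many reversals lead
from C to C'.
\<close>

fun path_edges :: "'a list \<Rightarrow> 'a set set" where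
  "path_edges (x # y # zs) = insert {x, y} (path_edges (y # zs))"
| "path_edges _ = {}"

definition cycle_edges :: "'a list \<Rightarrow> 'a set set" where
  "cycle_edges vs = path_edges (vs @ [hd vs])"

definition neighbours :: "'a set set \<Rightarrow> 'a \<Rightarrow> 'a set" where
  "neighbours E v = {u. {u, v} \<in> E}"

lemma degree_eq_card_neighbours: "degree E v = card (neighbours E v)"
  unfolding degree_def neighbours_def ..

lemma distinct_hd_neq_last: "distinct xs \<Longrightarrow> 2 \<le> length xs \<Longrightarrow> hd xs \<noteq> last xs"
  by (cases xs) auto

lemma path_edges_append:
  "xs \<noteq> [] \<Longrightarrow> ys \<noteq> [] \<Longrightarrow>
     path_edges (xs @ ys) = path_edges xs \<union> path_edges ys \<union> {{last xs, hd ys}}"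
proof (induction xs)
  case (Cons x xs)
  then show ?case by (cases xs; cases ys) auto
qed simp

lemma path_edges_rev: "path_edges (rev xs) = path_edges xs"
proof (induction xs rule: path_edges.induct)
  case (1 x y zs)
  have "path_edges (rev (x # y # zs)) = path_edges (rev (y # zs) @ [x])"
    by simp
  also have "\<dots> = path_edges (rev (y # zs)) \<union> {{y, x}}"
    by (subst path_edges_append) auto
  finally show ?case
    using "1.IH" by (auto simp: insert_commute)
qed auto

lemma path_edges_subset: "e \<in> path_edges xs \<Longrightarrow> e \<subseteq> set xs"
  by (induction xs rule: path_edges.induct) auto

lemma finite_path_edges: "finite (path_edges xs)"
  by (induction xs rule: path_edges.induct) auto

lemma card_path_edges: "distinct xs \<Longrightarrow> e \<in> path_edges xs \<Longrightarrow> card e = 2"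
  by (induction xs rule: path_edges.induct) auto

lemma Union_path_edges: "2 \<le> length xs \<Longrightarrow> \<Union>(path_edges xs) = set xs"
proof (induction xs rule: path_edges.induct)
  case (1 x y zs)
  then show ?case by (cases zs) auto
qed auto

lemma adj_rel_mono: "E \<subseteq> F \<Longrightarrow> adj_rel E \<subseteq> adj_rel F"
  unfolding adj_rel_def by auto

lemma path_edges_reachable: "x \<in> set xs \<Longrightarrow> (hd xs, x) \<in> (adj_rel (path_edges xs))\<^sup>*"
proof (induction xs rule: path_edges.induct)
  case (1 u v zs)
  have "(adj_rel (path_edges (v # zs)))\<^sup>* \<subseteq> (adj_rel (path_edges (u # v # zs)))\<^sup>*"
    by (intro rtrancl_mono adj_rel_mono) auto
  moreover have "(u, v) \<in> (adj_rel (path_edges (u # v # zs)))\<^sup>*"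
    by (cases "u = v") (auto simp: adj_rel_def)
  ultimately show ?case using 1 by (auto intro: rtrancl_trans)
qed auto

lemma cycle_edges_conv_path_edges:
  "vs \<noteq> [] \<Longrightarrow> cycle_edges vs = path_edges vs \<union> {{last vs, hd vs}}"
  unfolding cycle_edges_def by (simp add: path_edges_append)

lemma cycle_edges_append_commute: "cycle_edges (xs @ ys) = cycle_edges (ys @ xs)"
  by (cases "xs = [] \<or> ys = []")
    (auto simp: cycle_edges_def path_edges_append simp flip: append_assoc)

lemma cycle_edges_reverse_tail: "cycle_edges (x # rev xs) = cycle_edges (x # xs)"
proof -
  have "x # rev xs @ [x] = rev (x # xs @ [x])"
    by simp
  then show ?thesis
    unfolding cycle_edges_def by (simp only: path_edges_rev list.sel(1) append_Cons)
qed

lemma Union_cycle_edges: "vs \<noteq> [] \<Longrightarrow> \<Union>(cycle_edges vs) = set vs"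
  unfolding cycle_edges_def by (subst Union_path_edges) (auto simp: Suc_le_eq)

lemma neighbours_cycle_edges_hd:
  assumes "distinct (x # zs)" and "2 \<le> length zs"
  shows "neighbours (cycle_edges (x # zs)) x = {hd zs, last zs}"
proof -
  have zs: "zs \<noteq> []" "hd zs \<in> set zs" "last zs \<in> set zs"
    using assms(2) by (auto intro: hd_in_set last_in_set)
  have "cycle_edges (x # zs) = {{x, hd zs}} \<union> path_edges zs \<union> {{last zs, x}}"
    unfolding cycle_edges_def using zs(1) path_edges_append[of "x # zs" "[x]"]
    by (cases zs) auto
  moreover have "{u, x} \<notin> path_edges zs" for u
    using path_edges_subset assms(1) by fastforce
  ultimately show ?thesis
    using assms(1) zs unfolding neighbours_def by (auto simp: doubleton_eq_iff)
qed

lemma degree_cycle_edges: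
  assumes "distinct vs" and "3 \<le> length vs" and "v \<in> set vs"
  shows "degree (cycle_edges vs) v = 2"
proof -
  obtain xs ys where vs: "vs = xs @ v # ys"
    using split_list[OF assms(3)] by blast
  have "cycle_edges vs = cycle_edges (v # ys @ xs)"
    unfolding vs using cycle_edges_append_commute[of xs "v # ys"] by simp
  moreover have "distinct (v # ys @ xs)" "2 \<le> length (ys @ xs)"
    using assms(1,2) unfolding vs by auto
  ultimately show ?thesis
    unfolding degree_eq_card_neighbours
    by (simp add: neighbours_cycle_edges_hd distinct_hd_neq_last)
qed

lemma distinct_length_eq: "distinct vs \<Longrightarrow> set vs = {1..n} \<Longrightarrow> length vs = n"
  using distinct_card by fastforce

lemma connected_onI: "(\<And>v. v \<in> V \<Longrightarrow> (r, v) \<in> (adj_rel E)\<^sup>*) \<Longrightarrow> connected_on V E"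
proof -
  assume reach: "\<And>v. v \<in> V \<Longrightarrow> (r, v) \<in> (adj_rel E)\<^sup>*"
  have "sym ((adj_rel E)\<^sup>*)"
    by (intro sym_rtrancl) (auto simp: sym_def adj_rel_def insert_commute)
  then show ?thesis
    unfolding connected_on_def by (meson reach rtrancl_trans symD)
qed

lemma cycle_graph_cycle_edges:
  assumes "distinct vs" and "set vs = {1..n}" and "3 \<le> n"
  shows "cycle_graph n (cycle_edges vs)"
proof -
  have len: "3 \<le> length vs"
    using assms distinct_length_eq by metis
  then have vs: "vs \<noteq> []" by auto
  have card2: "card e = 2" if "e \<in> cycle_edges vs" for e
    using that card_path_edges[OF assms(1)] distinct_hd_neq_last[OF assms(1)] len
    by (auto simp: cycle_edges_conv_path_edges[OF vs])
  have "e \<subseteq> {1..n}" if "e \<in> cycle_edges vs" for e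
    using that assms(2) Union_cycle_edges[OF vs] by blast
  then have "simple_graph n (cycle_edges vs)"
    unfolding simple_graph_def using card2 by (metis card_2_iff insert_subset)
  moreover have "connected_on {1..n} (cycle_edges vs)"
  proof (rule connected_onI)
    fix v assume "v \<in> {1..n}"
    then have "(hd vs, v) \<in> (adj_rel (path_edges vs))\<^sup>*"
      using path_edges_reachable assms(2) by blast
    moreover have "path_edges vs \<subseteq> cycle_edges vs"
      by (auto simp: cycle_edges_conv_path_edges[OF vs])
    ultimately show "(hd vs, v) \<in> (adj_rel (cycle_edges vs))\<^sup>*"
      by (meson adj_rel_mono rtrancl_mono subsetD)
  qed
  ultimately show ?thesis
    unfolding cycle_graph_def is_cycle_on_def
    using assms card2 degree_cycle_edges[OF assms(1) len] vs Union_cycle_edges[OF vs]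
    by (auto simp: cycle_edges_def finite_path_edges)
qed

lemma connected_on_subset_closed:
  assumes "connected_on V E" and "r \<in> V" and "r \<in> S"
    and closed: "\<And>a b. a \<in> S \<Longrightarrow> (a, b) \<in> adj_rel E \<Longrightarrow> b \<in> S"
  shows "V \<subseteq> S"
proof
  fix v assume "v \<in> V"
  then have "(r, v) \<in> (adj_rel E)\<^sup>*"
    using assms(1,2) unfolding connected_on_def by blast
  then show "v \<in> S"
    by (induction rule: rtrancl_induct) (use assms(3) closed in blast)+
qed

lemma neighbours_subgraph_eq:
  assumes "F \<subseteq> E" and "degree F v = 2" and "degree E v = 2"
  shows "neighbours F v = neighbours E v"
proof (rule card_subset_eq)
  show "finite (neighbours E v)"
    using assms(3) by (intro card_ge_0_finite) (simp add: degree_eq_card_neighbours)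
qed (use assms in \<open>auto simp: degree_eq_card_neighbours neighbours_def\<close>)

lemma is_cycle_on_subgraph_eq:
  assumes cycle: "is_cycle_on V E" and "F \<subseteq> E" and "F \<noteq> {}"
    and deg: "\<forall>v\<in>\<Union>F. degree F v = 2"
  shows "F = E"
proof -
  have V: "\<Union>E = V" "\<forall>e\<in>E. card e = 2" "\<forall>v\<in>V. degree E v = 2" "connected_on V E"
    using cycle unfolding is_cycle_on_def by auto
  have nbrs: "neighbours F v = neighbours E v" if "v \<in> \<Union>F" for v
    using neighbours_subgraph_eq assms(2) deg V that by blast
  obtain r where r: "r \<in> \<Union>F"
    using assms(2,3) V(2) by (metis UnionI card.empty ex_in_conv subsetD zero_neq_numeral)
  have "V \<subseteq> \<Union>F"
  proof (rule connected_on_subset_closed[OF V(4) _ r])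
    show "r \<in> V" using r assms(2) V(1) by blast
    fix a b assume "a \<in> \<Union>F" "(a, b) \<in> adj_rel E"
    then have "{b, a} \<in> F"
      using nbrs by (auto simp: adj_rel_def neighbours_def insert_commute)
    then show "b \<in> \<Union>F" by blast
  qed
  have "e \<in> F" if "e \<in> E" for e
  proof -
    obtain a b where e: "e = {a, b}"
      using V(2) \<open>e \<in> E\<close> by (meson card_2_iff)
    then have "a \<in> \<Union>F"
      using \<open>V \<subseteq> \<Union>F\<close> V(1) \<open>e \<in> E\<close> by blast
    then show "e \<in> F"
      using nbrs \<open>e \<in> E\<close> e by (auto simp: neighbours_def insert_commute)
  qed
  then show ?thesis using assms(2) by blast
qed

lemma cycle_graph_unicyclic:
  assumes "cycle_graph n C"
  shows "unicyclic n C"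
proof -
  have C: "simple_graph n C" "is_cycle_on {1..n} C"
    using assms unfolding cycle_graph_def by auto
  then have "\<Union>C = {1..n}" "connected_on {1..n} C"
    unfolding is_cycle_on_def by auto
  moreover have "F = C" if "cycle_of C F" for F
    using that is_cycle_on_subgraph_eq[OF C(2)] unfolding cycle_of_def is_cycle_on_def by blast
  moreover have "cycle_of C C"
    unfolding cycle_of_def using C(2) calculation(1) by simp
  ultimately show ?thesis
    unfolding unicyclic_def using C(1) by blast
qed

lemma path_edges_around:
  assumes "xs \<noteq> []" and "ys \<noteq> []"
  shows "{last xs, w} \<in> path_edges (xs @ w # ys)" and "{w, hd ys} \<in> path_edges (xs @ w # ys)"
  using assms by (cases ys; simp add: path_edges_append)+

lemma path_interior_adjacent_last:
  assumes path: "distinct (xs @ w # ys)" "path_edges (xs @ w # ys) \<subseteq> C"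
    and "xs \<noteq> []" and "ys \<noteq> []" and "degree C w = 2" and "{w, last ys} \<in> C"
  shows "ys = [last ys]"
proof (rule ccontr)
  assume "ys \<noteq> [last ys]"
  then have "hd ys \<noteq> last ys"
    using path(1) \<open>ys \<noteq> []\<close> by (cases ys) auto
  moreover have "last xs \<noteq> hd ys" "last xs \<noteq> last ys"
  proof -
    have "set xs \<inter> set ys = {}"
      using path(1) by auto
    moreover have "last xs \<in> set xs" "hd ys \<in> set ys" "last ys \<in> set ys"
      using \<open>xs \<noteq> []\<close> \<open>ys \<noteq> []\<close> by auto
    ultimately show "last xs \<noteq> hd ys" "last xs \<noteq> last ys" by auto
  qed
  moreover have "{last xs, hd ys, last ys} \<subseteq> neighbours C w"
    using path_edges_around[OF \<open>xs \<noteq> []\<close> \<open>ys \<noteq> []\<close>, of w] path(2) assms(6)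
    unfolding neighbours_def by (auto simp: insert_commute)
  moreover have "card (neighbours C w) = 2"
    using assms(5) by (simp add: degree_eq_card_neighbours)
  ultimately show False
    using card_mono[of "neighbours C w" "{last xs, hd ys, last ys}"] card_ge_0_finite by force
qed

lemma maximal_path_closes:
  assumes deg: "\<forall>v\<in>\<Union>C. degree C v = 2" and loopfree: "\<forall>e\<in>C. card e = 2"
    and path: "distinct vs" "path_edges vs \<subseteq> C" "2 \<le> length vs"
    and maximal: "\<And>w. w \<notin> set vs \<Longrightarrow> {last vs, w} \<notin> C"
  shows "{last vs, hd vs} \<in> C" and "3 \<le> length vs"
proof -
  define u where "u = last vs"
  define pr where "pr = last (butlast vs)"
  have "butlast vs \<noteq> []"
    using path(3) by (cases vs rule: rev_cases) auto
  moreover have "vs = butlast vs @ [u]"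
    unfolding u_def using path(3) by (cases vs rule: rev_cases) auto
  ultimately have "{pr, u} \<in> C"
    unfolding pr_def using path(2) path_edges_append[of "butlast vs" "[u]"] by auto
  then have "card (neighbours C u) = 2" "pr \<in> neighbours C u"
    using deg by (auto simp: degree_eq_card_neighbours neighbours_def)
  then obtain w where w: "w \<in> neighbours C u" "w \<noteq> pr"
    by (metis card_2_iff insert_iff)
  then have "{w, u} \<in> C" "w \<noteq> u"
    using loopfree unfolding neighbours_def by fastforce+
  then have "w \<in> set vs"
    using maximal unfolding u_def by (metis insert_commute)
  have w_hd: "w = hd vs"
  proof (rule ccontr)
    assume "w \<noteq> hd vs"
    obtain xs ys where split: "vs = xs @ w # ys"
      using split_list[OF \<open>w \<in> set vs\<close>] by blast
    have "xs \<noteq> []" "ys \<noteq> []" "u = last ys"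
      using \<open>w \<noteq> hd vs\<close> \<open>w \<noteq> u\<close> unfolding u_def split by auto
    moreover have "degree C w = 2"
      using deg \<open>{w, u} \<in> C\<close> by blast
    ultimately have "ys = [u]"
      using path_interior_adjacent_last path \<open>{w, u} \<in> C\<close> unfolding split by metis
    then show False
      using w(2) unfolding pr_def split by (simp add: butlast_append)
  qed
  then show "{last vs, hd vs} \<in> C"
    using \<open>{w, u} \<in> C\<close> unfolding u_def by (simp add: insert_commute)
  show "3 \<le> length vs"
  proof (rule ccontr)
    assume "\<not> 3 \<le> length vs"
    then have "length vs = 2"
      using path(3) by simp
    then obtain a b where "vs = [a, b]"
      by (auto simp: numeral_2_eq_2 length_Suc_conv)
    then show False
      using w(2) w_hd unfolding pr_def by simp
  qed
qed

lemma obtain_maximal_path: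
  assumes "{a, b} \<in> C" and "a \<noteq> b" and "finite (\<Union>C)"
  obtains vs where "distinct vs" "path_edges vs \<subseteq> C" "2 \<le> length vs"
    "\<And>w. w \<notin> set vs \<Longrightarrow> {last vs, w} \<notin> C"
proof -
  define is_path where "is_path vs \<longleftrightarrow> distinct vs \<and> path_edges vs \<subseteq> C \<and> 2 \<le> length vs" for vs
  have "is_path [a, b]"
    unfolding is_path_def using assms(1,2) by simp
  moreover have "length vs < Suc (card (\<Union>C))" if "is_path vs" for vs
  proof -
    have "set vs \<subseteq> \<Union>C"
      using that Union_path_edges unfolding is_path_def by blast
    then have "card (set vs) \<le> card (\<Union>C)"
      using card_mono[OF assms(3)] by blast
    then show ?thesis
      using that distinct_card unfolding is_path_def by fastforce
  qed
  ultimately obtain vs where vs: "is_path vs" and longest: "\<And>ws. is_path ws \<Longrightarrow> length ws \<le> length vs"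
    using ex_has_greatest_nat[of is_path "[a, b]" length "Suc (card (\<Union>C))"] by metis
  have "{last vs, w} \<notin> C" if "w \<notin> set vs" for w
  proof
    assume "{last vs, w} \<in> C"
    moreover have "vs \<noteq> []"
      using vs unfolding is_path_def by auto
    ultimately have "is_path (vs @ [w])"
      using vs that path_edges_append[of vs "[w]"] unfolding is_path_def by auto
    then show False
      using longest by fastforce
  qed
  then show ?thesis
    using that vs unfolding is_path_def by blast
qed

lemma cycle_graph_obtain_cycle_edges:
  assumes "cycle_graph n C"
  obtains vs where "distinct vs" "set vs = {1..n}" "3 \<le> length vs" "C = cycle_edges vs"
proof -
  have cycle: "is_cycle_on {1..n} C"
    using assms unfolding cycle_graph_def by simp
  then have C: "\<Union>C = {1..n}" "\<forall>e\<in>C. card e = 2" "\<forall>v\<in>\<Union>C. degree C v = 2" "C \<noteq> {}"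
    unfolding is_cycle_on_def by auto
  obtain a b where ab: "{a, b} \<in> C" "a \<noteq> b"
    using C(2,4) by (metis card_2_iff ex_in_conv)
  have "finite (\<Union>C)"
    using C(1) by simp
  then obtain vs where vs: "distinct vs" "path_edges vs \<subseteq> C" "2 \<le> length vs"
    and maximal: "\<And>w. w \<notin> set vs \<Longrightarrow> {last vs, w} \<notin> C"
    using obtain_maximal_path[OF ab] by blast
  have closes: "{last vs, hd vs} \<in> C" and len: "3 \<le> length vs"
    using maximal_path_closes[OF C(3,2) vs maximal] by blast+
  have "vs \<noteq> []"
    using len by auto
  have "cycle_edges vs = C"
  proof (rule is_cycle_on_subgraph_eq[OF cycle])
    show "cycle_edges vs \<subseteq> C" "cycle_edges vs \<noteq> {}"
      using vs(2) closes by (auto simp: cycle_edges_conv_path_edges[OF \<open>vs \<noteq> []\<close>])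
    show "\<forall>v\<in>\<Union>(cycle_edges vs). degree (cycle_edges vs) v = 2"
      using degree_cycle_edges[OF vs(1) len] unfolding Union_cycle_edges[OF \<open>vs \<noteq> []\<close>] by blast
  qed
  moreover have "set vs = {1..n}"
    using Union_cycle_edges[OF \<open>vs \<noteq> []\<close>] C(1) calculation by simp
  ultimately show ?thesis
    using that vs(1) len by blast
qed

lemma reverse_segment_two_switch:
  fixes p q r :: "nat list"
  defines "A \<equiv> (last p, hd q, last q, hd (r @ [hd p]))"
  assumes dist: "distinct (p @ q @ r)" and "p \<noteq> []" and "2 \<le> length q"
    and nondegenerate: "r \<noteq> [] \<or> 2 \<le> length p"
  shows "interchangeable (cycle_edges (p @ q @ r)) A"
    and "two_switch A (cycle_edges (p @ q @ r)) = cycle_edges (p @ rev q @ r)"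
proof -
  define R where "R = r @ [hd p]"
  define a b c d where "a = last p" and "b = hd q" and "c = last q" and "d = hd R"
  have A: "A = (a, b, c, d)"
    unfolding A_def a_def b_def c_def d_def R_def ..
  have "q \<noteq> []"
    using \<open>2 \<le> length q\<close> by auto
  have q_disjoint: "set q \<inter> set p = {}" "set q \<inter> set R = {}"
    using dist \<open>p \<noteq> []\<close> unfolding R_def by (auto dest: hd_in_set)
  have "a \<in> set p" "d \<in> set R"
    using \<open>p \<noteq> []\<close> unfolding a_def d_def R_def by (auto simp: hd_append)
  then have inside: "b \<in> set q" "c \<in> set q" and outside: "a \<notin> set q" "d \<notin> set q"
    using \<open>q \<noteq> []\<close> q_disjoint unfolding b_def c_def by auto
  have "b \<noteq> c"
    using dist \<open>2 \<le> length q\<close> distinct_hd_neq_last[of q] unfolding b_def c_def by simp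
  have "a \<noteq> d"
  proof (cases r)
    case Nil
    then show ?thesis
      using dist nondegenerate distinct_hd_neq_last[of p] unfolding a_def d_def R_def by auto
  next
    case (Cons x xs)
    then show ?thesis
      using dist \<open>p \<noteq> []\<close> unfolding a_def d_def R_def by auto
  qed
  define X where "X = path_edges p \<union> path_edges q \<union> path_edges R"
  \<comment> \<open>every edge of X lies within p, q or R, so none joins q to its complement\<close>
  have crossing: "{x, y} \<notin> X" if "x \<in> set q" "y \<notin> set q" for x y
    using that q_disjoint path_edges_subset unfolding X_def by blast
  have old: "cycle_edges (p @ q @ r) = X \<union> {{a, b}, {c, d}}"
    unfolding cycle_edges_def X_def a_def b_def c_def d_def R_def
    using \<open>p \<noteq> []\<close> \<open>q \<noteq> []\<close> by (simp add: path_edges_append Un_ac insert_commute)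
  have new: "cycle_edges (p @ rev q @ r) = X \<union> {{a, c}, {b, d}}"
    unfolding cycle_edges_def X_def a_def b_def c_def d_def R_def
    using \<open>p \<noteq> []\<close> \<open>q \<noteq> []\<close>
    by (simp add: path_edges_append path_edges_rev hd_rev last_rev Un_ac insert_commute)
  have "{a, b} \<notin> X" "{c, d} \<notin> X" "{a, c} \<notin> X" "{b, d} \<notin> X"
    using crossing[OF inside(1) outside(1)] crossing[OF inside(2) outside(2)]
      crossing[OF inside(2) outside(1)] crossing[OF inside(1) outside(2)]
    by (simp_all add: insert_commute)
  then show "interchangeable (cycle_edges (p @ q @ r)) A"
    unfolding A interchangeable_def old
    using inside outside \<open>b \<noteq> c\<close> \<open>a \<noteq> d\<close> by (auto simp: doubleton_eq_iff)
  then show "two_switch A (cycle_edges (p @ q @ r)) = cycle_edges (p @ rev q @ r)"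
    unfolding two_switch_def A new
    using old \<open>{a, b} \<notin> X\<close> \<open>{c, d} \<notin> X\<close> by (auto simp: A)
qed

lemma u_switch_seq_append:
  "u_switch_seq n G ts G' \<Longrightarrow> u_switch_seq n G' ts' G'' \<Longrightarrow> u_switch_seq n G (ts @ ts') G''"
  by (induction ts arbitrary: G) auto

lemma reverse_segment_u_switch_seq:
  assumes "distinct (p @ q @ r)" and "set (p @ q @ r) = {1..n}" and "3 \<le> n" and "p \<noteq> []"
  shows "\<exists>ts. u_switch_seq n (cycle_edges (p @ q @ r)) ts (cycle_edges (p @ rev q @ r))"
proof -
  consider "length q < 2" | "r = []" "length p = 1" | "2 \<le> length q" "r \<noteq> [] \<or> 2 \<le> length p"
    using \<open>p \<noteq> []\<close> by (cases p; cases "tl p"; cases "length q < 2") auto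
  then show ?thesis
  proof cases
    case 1
    then have "rev q = q"
      by (cases q) auto
    then show ?thesis
      using u_switch_seq.simps(1) by metis
  next
    case 2
    then obtain x where "p = [x]"
      by (cases p) auto
    then have "cycle_edges (p @ rev q @ r) = cycle_edges (p @ q @ r)"
      using \<open>r = []\<close> cycle_edges_reverse_tail by simp
    then show ?thesis
      using u_switch_seq.simps(1) by metis
  next
    case 3
    define A where "A = (last p, hd q, last q, hd (r @ [hd p]))"
    have "distinct (p @ rev q @ r)" "set (p @ rev q @ r) = {1..n}"
      using assms(1,2) by auto
    then have "unicyclic n (cycle_edges (p @ rev q @ r))"
      using cycle_graph_unicyclic cycle_graph_cycle_edges \<open>3 \<le> n\<close> by blast
    then have "u_switch_seq n (cycle_edges (p @ q @ r)) [A] (cycle_edges (p @ rev q @ r))"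
      using reverse_segment_two_switch[OF assms(1,4) 3] by (simp add: u_switch_def A_def)
    then show ?thesis by blast
  qed
qed

lemma u_switch_seq_common_prefix:
  assumes "distinct vs" "set vs = {1..n}" "distinct ws" "set ws = {1..n}" "3 \<le> n"
    and "1 \<le> k" "take k vs = take k ws"
  shows "\<exists>ts. u_switch_seq n (cycle_edges vs) ts (cycle_edges ws)"
  using assms
proof (induction "n - k" arbitrary: k vs)
  case 0
  then have "vs = ws"
    using distinct_length_eq by (metis diff_is_0_eq take_all)
  then show ?case
    using u_switch_seq.simps(1) by metis
next
  case (Suc m)
  define p where "p = take k vs"
  define y where "y = ws ! k"
  have "k < n" "length vs = n" "length ws = n"
    using Suc.hyps Suc.prems distinct_length_eq by auto
  have "y \<notin> set p"
    using Suc.prems(3,7) \<open>k < n\<close> \<open>length ws = n\<close>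
    unfolding p_def y_def by (simp add: in_set_conv_nth nth_eq_iff_index_eq)
  moreover have "y \<in> set vs"
    using Suc.prems(2,4) \<open>k < n\<close> \<open>length ws = n\<close> unfolding y_def by auto
  ultimately have "y \<in> set (drop k vs)"
    unfolding p_def by (metis Un_iff append_take_drop_id set_append)
  then obtain q' r where "drop k vs = q' @ y # r"
    using split_list by metis
  then have vs: "vs = p @ (q' @ [y]) @ r"
    unfolding p_def by (metis append_Cons append_assoc append_take_drop_id self_append_conv2)
  define vs' where "vs' = p @ rev (q' @ [y]) @ r"
  have "take (Suc k) vs' = take (Suc k) ws"
    using Suc.prems(7) \<open>k < n\<close> \<open>length vs = n\<close> \<open>length ws = n\<close>
    unfolding vs'_def p_def y_def by (simp add: take_Suc_conv_app_nth)
  moreover have "distinct vs'" "set vs' = {1..n}"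
    using Suc.prems(1,2) unfolding vs vs'_def by auto
  moreover have "m = n - Suc k"
    using Suc.hyps(2) by simp
  ultimately obtain ts' where "u_switch_seq n (cycle_edges vs') ts' (cycle_edges ws)"
    using Suc.hyps(1)[of "Suc k" vs'] Suc.prems(3-5) by auto
  moreover have "p \<noteq> []"
    unfolding p_def using Suc.prems(6) \<open>k < n\<close> \<open>length vs = n\<close> by auto
  then obtain ts where "u_switch_seq n (cycle_edges vs) ts (cycle_edges vs')"
    using reverse_segment_u_switch_seq[of p "q' @ [y]" r n] Suc.prems(1,2,5)
    unfolding vs'_def vs by blast
  ultimately show ?case
    using u_switch_seq_append by blast
qed

theorem lemma3p6:
  fixes n :: nat and C C' :: "nat set set" and e :: "nat set"
  assumes "cycle_graph n C" and "cycle_graph n C'"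
    and "\<forall>v\<in>{1..n}. degree C v = degree C' v"
    and "e \<in> C \<inter> C'"
  shows "\<exists>ts. u_switch_seq n C ts C'"
proof -
  obtain vs where vs: "distinct vs" "set vs = {1..n}" "3 \<le> length vs" "C = cycle_edges vs"
    using cycle_graph_obtain_cycle_edges[OF assms(1)] .
  obtain ws where ws: "distinct ws" "set ws = {1..n}" "C' = cycle_edges ws"
    using cycle_graph_obtain_cycle_edges[OF assms(2)] .
  have "3 \<le> n"
    using vs distinct_length_eq by metis
  have "ws \<noteq> []"
    using ws(2) \<open>3 \<le> n\<close> by auto
  then obtain xs ys where split: "vs = xs @ hd ws # ys"
    using vs(2) ws(2) split_list hd_in_set by metis
  define vs0 where "vs0 = hd ws # ys @ xs"
  have "C = cycle_edges vs0"
    unfolding vs(4) vs0_def split using cycle_edges_append_commute[of xs] by simp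
  moreover have "distinct vs0" "set vs0 = {1..n}" "take 1 vs0 = take 1 ws"
    using vs(1,2) \<open>ws \<noteq> []\<close> unfolding vs0_def split by (auto simp: take_Suc)
  ultimately show ?thesis
    using u_switch_seq_common_prefix[of vs0 n ws 1] ws \<open>3 \<le> n\<close> by simp
qed

end
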